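(* Let $V$ be a set of propositional variables and let $\mu$ be a function assigning to every definable model set $\Sigma\subseteq\Pi V$ a subset $\mu(\Sigma)\subseteq\Sigma$; define $T\mathrel{|\!\sim}\psi$ iff $\mu(M(T))\subseteq M(\psi)$. Say that $\mathrel{|\!\sim}$ has interpolation iff for all definable $\Sigma,\Sigma'\subseteq\Pi V$ with $\mu(\Sigma)\subseteq\Sigma'$ there is a definable $\Sigma''$ with $\mu(\Sigma)\subseteq\Sigma''\subseteq\Sigma'$ and $R(\Sigma'')\subseteq R(\Sigma)\cap R(\Sigma')$. (a) If $V$ is finite, then $\mathrel{|\!\sim}$ has interpolation iff $I(\Sigma)\subseteq I(\mu(\Sigma))$ for all $\Sigma\subseteq\Pi V$. (b) If $V$ is infinite and $\mu(\Sigma)$ is definable whenever $\Sigma$ is definable, then $\mathrel{|\!\sim}$ has interpolation iff $I(\Sigma)\subseteq I(\mu(\Sigma))$ for all definable $\Sigma\subseteq\Pi V$.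
   Context: Classical propositional logic: $\Pi V$ is the set of all assignments $V\to\{\mathrm{TRUE},\mathrm{FALSE}\}$ (models), $M(T)$ the set of models of a theory $T$, and a set of models is definable if it equals $M(T)$ for some theory $T$ (in a finite language every set of models is definable). For $\Sigma\subseteq\Pi V$, a variable $p$ is irrelevant for $\Sigma$ if changing the value of $p$ in any element of $\Sigma$ yields again an element of $\Sigma$; $I(\Sigma)$ is the set of irrelevant variables and $R(\Sigma):=V-I(\Sigma)$ the set of relevant (essential) variables. *)

theory Defs
  imports Main
begin

text \<open>Classical propositional logic over the variable set V, represented as the type 'v.
  A model is an assignment 'v \<Rightarrow> bool (True = TRUE, False = FALSE); \<Pi>V is the whole type.\<close>

datatype 'v form =
    Var 'v
  | Top
  | Bot
  | Neg "'v form"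
  | Conj "'v form" "'v form"
  | Disj "'v form" "'v form"
  | Imp "'v form" "'v form"

fun sat :: "('v \<Rightarrow> bool) \<Rightarrow> 'v form \<Rightarrow> bool" where
  "sat m (Var p) = m p"
| "sat m Top = True"
| "sat m Bot = False"
| "sat m (Neg \<phi>) = (\<not> sat m \<phi>)"
| "sat m (Conj \<phi> \<psi>) = (sat m \<phi> \<and> sat m \<psi>)"
| "sat m (Disj \<phi> \<psi>) = (sat m \<phi> \<or> sat m \<psi>)"
| "sat m (Imp \<phi> \<psi>) = (sat m \<phi> \<longrightarrow> sat m \<psi>)"

definition Mod1 :: "'v form \<Rightarrow> ('v \<Rightarrow> bool) set" where
  "Mod1 \<psi> = {m. sat m \<psi>}"

definition Mod :: "'v form set \<Rightarrow> ('v \<Rightarrow> bool) set" where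
  "Mod T = {m. \<forall>\<phi>\<in>T. sat m \<phi>}"

definition definable :: "('v \<Rightarrow> bool) set \<Rightarrow> bool" where
  "definable \<Sigma> \<longleftrightarrow> (\<exists>T. \<Sigma> = Mod T)"

definition irrelevant :: "('v \<Rightarrow> bool) set \<Rightarrow> 'v \<Rightarrow> bool" where
  "irrelevant \<Sigma> p \<longleftrightarrow> (\<forall>m\<in>\<Sigma>. m(p := \<not> m p) \<in> \<Sigma>)"

definition Irr :: "('v \<Rightarrow> bool) set \<Rightarrow> 'v set" where
  "Irr \<Sigma> = {p. irrelevant \<Sigma> p}"

definition Rel :: "('v \<Rightarrow> bool) set \<Rightarrow> 'v set" where
  "Rel \<Sigma> = UNIV - Irr \<Sigma>"

definition nm_cons :: "(('v \<Rightarrow> bool) set \<Rightarrow> ('v \<Rightarrow> bool) set) \<Rightarrow> 'v form set \<Rightarrow> 'v form \<Rightarrow> bool" where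
  "nm_cons \<mu> T \<psi> \<longleftrightarrow> \<mu> (Mod T) \<subseteq> Mod1 \<psi>"

definition has_interpolation :: "(('v \<Rightarrow> bool) set \<Rightarrow> ('v \<Rightarrow> bool) set) \<Rightarrow> bool" where
  "has_interpolation \<mu> \<longleftrightarrow>
     (\<forall>\<Sigma> \<Sigma>'. definable \<Sigma> \<and> definable \<Sigma>' \<and> \<mu> \<Sigma> \<subseteq> \<Sigma>' \<longrightarrow>
        (\<exists>\<Sigma>''. definable \<Sigma>'' \<and> \<mu> \<Sigma> \<subseteq> \<Sigma>'' \<and> \<Sigma>'' \<subseteq> \<Sigma>' \<and>
                Rel \<Sigma>'' \<subseteq> Rel \<Sigma> \<inter> Rel \<Sigma>'))"

end

theory Submission
  imports Defs
begin

text \<open>A definable model set is closed under changing any set of its irrelevant variables, since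
  each formula of a defining theory mentions only finitely many variables. This yields ordinary
  interpolation for definable \<open>A \<subseteq> B\<close>: the theory of \<open>A\<close> in the variables \<open>R(A) \<inter> R(B)\<close>
  defines a subset of \<open>B\<close>, because a model of it agrees with some element of \<open>A\<close> on the
  variables of \<open>R(A) \<inter> R(B)\<close> occurring in a given formula of \<open>B\<close>, while the remaining variables
  of that formula are irrelevant for \<open>A\<close> or for \<open>B\<close>. Interpolating between \<open>\<mu>(\<Sigma>)\<close> and \<open>\<Sigma>'\<close>
  shows that \<open>R(\<mu>(\<Sigma>)) \<subseteq> R(\<Sigma>)\<close> suffices; interpolating between \<open>\<mu>(\<Sigma>)\<close> and itself shows
  that it is necessary. In a finite language every model set is definable.\<close>

fun vars :: "'v form \<Rightarrow> 'v set" where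
  "vars (Var p) = {p}"
| "vars Top = {}"
| "vars Bot = {}"
| "vars (Neg \<phi>) = vars \<phi>"
| "vars (Conj \<phi> \<psi>) = vars \<phi> \<union> vars \<psi>"
| "vars (Disj \<phi> \<psi>) = vars \<phi> \<union> vars \<psi>"
| "vars (Imp \<phi> \<psi>) = vars \<phi> \<union> vars \<psi>"

lemma finite_vars: "finite (vars \<phi>)"
  by (induction \<phi>) auto

lemma sat_cong: "(\<And>p. p \<in> vars \<phi> \<Longrightarrow> m p = n p) \<Longrightarrow> sat m \<phi> = sat n \<phi>"
  by (induction \<phi>) auto

definition conj_lits :: "('v \<Rightarrow> bool) \<Rightarrow> 'v list \<Rightarrow> 'v form" where
  "conj_lits m xs = foldr (\<lambda>p \<phi>. Conj (if m p then Var p else Neg (Var p)) \<phi>) xs Top"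

lemma sat_conj_lits: "sat n (conj_lits m xs) \<longleftrightarrow> (\<forall>p\<in>set xs. n p = m p)"
  by (induction xs) (auto simp: conj_lits_def)

lemma vars_conj_lits: "vars (conj_lits m xs) = set xs"
  by (induction xs) (auto simp: conj_lits_def)

lemma Irr_change_finite:
  assumes "finite D" "x \<in> \<Sigma>" "D \<subseteq> Irr \<Sigma>" "\<And>p. p \<notin> D \<Longrightarrow> y p = x p"
  shows "y \<in> \<Sigma>"
  using assms
proof (induction D arbitrary: y rule: finite_induct)
  case empty
  then have "y = x" by auto
  with empty.prems(1) show ?case by simp
next
  case (insert a D)
  have y': "y(a := x a) \<in> \<Sigma>"
    by (rule insert.IH) (use insert.prems in auto)
  show ?case
  proof (cases "y a = x a")
    case True
    with y' show ?thesis by (simp add: fun_upd_idem)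
  next
    case False
    have "irrelevant \<Sigma> a" using insert.prems(2) by (simp add: Irr_def)
    with y' have "(y(a := x a))(a := \<not> x a) \<in> \<Sigma>" unfolding irrelevant_def by force
    moreover have "(y(a := x a))(a := \<not> x a) = y" using False by (auto simp: fun_eq_iff)
    ultimately show ?thesis by simp
  qed
qed

lemma definable_Irr_change:
  assumes "definable \<Sigma>" "x \<in> \<Sigma>" "\<And>p. x p \<noteq> y p \<Longrightarrow> p \<in> Irr \<Sigma>"
  shows "y \<in> \<Sigma>"
proof -
  obtain T where T: "\<Sigma> = Mod T" using assms(1) by (auto simp: definable_def)
  have "sat y \<phi>" if "\<phi> \<in> T" for \<phi>
  proof -
    define z where "z = (\<lambda>p. if p \<in> vars \<phi> then y p else x p)"
    have "finite {p \<in> vars \<phi>. x p \<noteq> y p}"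
      using finite_vars[of \<phi>] by simp
    then have "z \<in> \<Sigma>"
      by (rule Irr_change_finite[OF _ assms(2)]) (use assms(3) in \<open>auto simp: z_def\<close>)
    with T that have "sat z \<phi>" by (auto simp: Mod_def)
    moreover have "sat z \<phi> = sat y \<phi>" by (rule sat_cong) (simp add: z_def)
    ultimately show ?thesis by simp
  qed
  with T show ?thesis by (auto simp: Mod_def)
qed

definition theory_on :: "'v set \<Rightarrow> ('v \<Rightarrow> bool) set \<Rightarrow> 'v form set" where
  "theory_on J A = {\<phi>. vars \<phi> \<subseteq> J \<and> A \<subseteq> Mod1 \<phi>}"

lemma subset_Mod_theory_on: "A \<subseteq> Mod (theory_on J A)"
  by (auto simp: theory_on_def Mod_def Mod1_def)

lemma Rel_Mod_subset:
  assumes "\<And>\<phi>. \<phi> \<in> T \<Longrightarrow> vars \<phi> \<subseteq> J"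
  shows "Rel (Mod T) \<subseteq> J"
proof -
  have "irrelevant (Mod T) p" if "p \<notin> J" for p
  proof -
    have "sat (m(p := \<not> m p)) \<phi> = sat m \<phi>" if "\<phi> \<in> T" for m \<phi>
      by (rule sat_cong) (use assms that \<open>p \<notin> J\<close> in auto)
    then show ?thesis by (auto simp: irrelevant_def Mod_def)
  qed
  then show ?thesis by (auto simp: Rel_def Irr_def)
qed

lemma Rel_Mod_theory_on: "Rel (Mod (theory_on J A)) \<subseteq> J"
  by (rule Rel_Mod_subset) (simp add: theory_on_def)

lemma Mod_theory_on_agrees:
  assumes "m \<in> Mod (theory_on J A)" "finite K" "K \<subseteq> J"
  obtains n where "n \<in> A" "\<And>p. p \<in> K \<Longrightarrow> n p = m p"
proof -
  obtain xs where xs: "set xs = K" using finite_list[OF assms(2)] by blast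
  have "Neg (conj_lits m xs) \<notin> theory_on J A"
    using assms(1) by (auto simp: Mod_def sat_conj_lits)
  then have "\<exists>n\<in>A. \<forall>p\<in>K. n p = m p"
    using assms(3) by (auto simp: theory_on_def Mod1_def sat_conj_lits vars_conj_lits xs)
  with that show ?thesis by blast
qed

lemma definable_finite_UNIV:
  assumes "finite (UNIV :: 'v set)"
  shows "definable (S :: ('v \<Rightarrow> bool) set)"
proof -
  have "Mod (theory_on UNIV S) \<subseteq> S"
  proof
    fix m assume "m \<in> Mod (theory_on UNIV S)"
    then obtain n where n: "n \<in> S" "\<And>p. n p = m p"
      using assms by (rule Mod_theory_on_agrees) auto
    have "n = m" using n(2) by (rule ext)
    with n(1) show "m \<in> S" by simp
  qed
  with subset_Mod_theory_on have "S = Mod (theory_on UNIV S)" by blast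
  then show ?thesis by (auto simp: definable_def)
qed

lemma Mod_theory_on_Rel_subset:
  assumes "definable A" "definable B" "A \<subseteq> B"
  shows "Mod (theory_on (Rel A \<inter> Rel B) A) \<subseteq> B"
proof
  fix m assume m: "m \<in> Mod (theory_on (Rel A \<inter> Rel B) A)"
  obtain T where T: "B = Mod T" using assms(2) by (auto simp: definable_def)
  have "sat m \<psi>" if "\<psi> \<in> T" for \<psi>
  proof -
    define K where "K = vars \<psi> \<inter> Rel A \<inter> Rel B"
    obtain n where n: "n \<in> A" "\<And>p. p \<in> K \<Longrightarrow> n p = m p"
      using m by (rule Mod_theory_on_agrees[of _ _ _ K]) (auto simp: K_def finite_vars)
    define n' where "n' p = (if p \<in> Irr A then m p else n p)" for p
    have "n' \<in> A"
      by (rule definable_Irr_change[OF assms(1) n(1)]) (simp add: n'_def split: if_split_asm)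
    define y where "y p = (if p \<in> vars \<psi> then m p else n' p)" for p
    have "y \<in> B"
    proof (rule definable_Irr_change[OF assms(2)])
      show "n' \<in> B" using \<open>n' \<in> A\<close> assms(3) by blast
      show "p \<in> Irr B" if "n' p \<noteq> y p" for p
      proof -
        from that have "p \<in> vars \<psi>" "n' p \<noteq> m p"
          by (cases "p \<in> vars \<psi>"; simp add: y_def)+
        moreover from \<open>n' p \<noteq> m p\<close> have "p \<notin> Irr A" "n p \<noteq> m p"
          by (cases "p \<in> Irr A"; simp add: n'_def)+
        ultimately show ?thesis using n(2)[of p] by (auto simp: K_def Rel_def)
      qed
    qed
    with T that have "sat y \<psi>" by (auto simp: Mod_def)
    moreover have "sat y \<psi> = sat m \<psi>" by (rule sat_cong) (simp add: y_def)
    ultimately show ?thesis by simp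
  qed
  with T show "m \<in> B" by (auto simp: Mod_def)
qed

theorem definable_interpolation:
  assumes "definable A" "definable B" "A \<subseteq> B"
  shows "\<exists>C. definable C \<and> A \<subseteq> C \<and> C \<subseteq> B \<and> Rel C \<subseteq> Rel A \<inter> Rel B"
proof (intro exI conjI)
  show "definable (Mod (theory_on (Rel A \<inter> Rel B) A))" by (auto simp: definable_def)
qed (fact subset_Mod_theory_on Mod_theory_on_Rel_subset[OF assms] Rel_Mod_theory_on)+

lemma has_interpolation_iff_Irr_subset:
  assumes mu_definable: "\<And>\<Sigma>. definable \<Sigma> \<Longrightarrow> definable (\<mu> \<Sigma>)"
  shows "has_interpolation \<mu> \<longleftrightarrow> (\<forall>\<Sigma>. definable \<Sigma> \<longrightarrow> Irr \<Sigma> \<subseteq> Irr (\<mu> \<Sigma>))"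
proof (intro iffI allI impI)
  fix \<Sigma> :: "('a \<Rightarrow> bool) set"
  assume "has_interpolation \<mu>" "definable \<Sigma>"
  then obtain C where "\<mu> \<Sigma> \<subseteq> C" "C \<subseteq> \<mu> \<Sigma>" "Rel C \<subseteq> Rel \<Sigma> \<inter> Rel (\<mu> \<Sigma>)"
    using mu_definable unfolding has_interpolation_def by (meson order_refl)
  then have "Rel (\<mu> \<Sigma>) \<subseteq> Rel \<Sigma>" by auto
  then show "Irr \<Sigma> \<subseteq> Irr (\<mu> \<Sigma>)" by (auto simp: Rel_def)
next
  assume Irr_subset: "\<forall>\<Sigma>. definable \<Sigma> \<longrightarrow> Irr \<Sigma> \<subseteq> Irr (\<mu> \<Sigma>)"
  show "has_interpolation \<mu>"
    unfolding has_interpolation_def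
  proof (intro allI impI)
    fix \<Sigma> \<Sigma>' :: "('a \<Rightarrow> bool) set"
    assume \<Sigma>\<Sigma>': "definable \<Sigma> \<and> definable \<Sigma>' \<and> \<mu> \<Sigma> \<subseteq> \<Sigma>'"
    then obtain C where "definable C" "\<mu> \<Sigma> \<subseteq> C" "C \<subseteq> \<Sigma>'"
        "Rel C \<subseteq> Rel (\<mu> \<Sigma>) \<inter> Rel \<Sigma>'"
      using definable_interpolation[OF mu_definable] by metis
    moreover have "Rel (\<mu> \<Sigma>) \<subseteq> Rel \<Sigma>"
      using Irr_subset \<Sigma>\<Sigma>' by (auto simp: Rel_def)
    ultimately show "\<exists>\<Sigma>''. definable \<Sigma>'' \<and> \<mu> \<Sigma> \<subseteq> \<Sigma>'' \<and> \<Sigma>'' \<subseteq> \<Sigma>' \<and> Rel \<Sigma>'' \<subseteq> Rel \<Sigma> \<inter> Rel \<Sigma>'"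
      by blast
  qed
qed

theorem fact4p2:
  fixes \<mu> :: "('v \<Rightarrow> bool) set \<Rightarrow> ('v \<Rightarrow> bool) set"
  assumes mu_sub: "\<And>\<Sigma>. definable \<Sigma> \<Longrightarrow> \<mu> \<Sigma> \<subseteq> \<Sigma>"
  shows "(finite (UNIV :: 'v set) \<longrightarrow>
            (has_interpolation \<mu> \<longleftrightarrow> (\<forall>\<Sigma>. Irr \<Sigma> \<subseteq> Irr (\<mu> \<Sigma>))))
       \<and> (infinite (UNIV :: 'v set) \<and> (\<forall>\<Sigma>. definable \<Sigma> \<longrightarrow> definable (\<mu> \<Sigma>)) \<longrightarrow>
            (has_interpolation \<mu> \<longleftrightarrow> (\<forall>\<Sigma>. definable \<Sigma> \<longrightarrow> Irr \<Sigma> \<subseteq> Irr (\<mu> \<Sigma>))))"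
proof (intro conjI impI)
  assume "finite (UNIV :: 'v set)"
  then have "definable (S :: ('v \<Rightarrow> bool) set)" for S by (rule definable_finite_UNIV)
  then show "has_interpolation \<mu> \<longleftrightarrow> (\<forall>\<Sigma>. Irr \<Sigma> \<subseteq> Irr (\<mu> \<Sigma>))"
    by (simp add: has_interpolation_iff_Irr_subset)
next
  assume "infinite (UNIV :: 'v set) \<and> (\<forall>\<Sigma>. definable \<Sigma> \<longrightarrow> definable (\<mu> \<Sigma>))"
  then show "has_interpolation \<mu> \<longleftrightarrow> (\<forall>\<Sigma>. definable \<Sigma> \<longrightarrow> Irr \<Sigma> \<subseteq> Irr (\<mu> \<Sigma>))"
    by (simp add: has_interpolation_iff_Irr_subset)
qed

end
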